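(* Let $\Theta$ be a variety, $H\in\Theta$, $X=\{x_1,\dots,x_n\}\in\Gamma^0$, and let $s:W(X^0)\to W(X)$ be a special homomorphism. Then for every $X$-special formula $u=u(x_1,\dots,x_n;y_1,\dots,y_m)\in\Phi(X^0)$ and every point $\mu:W(X)\to H$ we have $u\in Tp^H(\mu)$ if and only if $s_*u\in LKer(\mu)$.
   Context: Fix a variety $\Theta$ of algebras; $X^0$ is an infinite set of variables, $\Gamma^0$ the set of its finite subsets, $W(X)$ the free $\Theta$-algebra on $X$. For $H\in\Theta$, points are homomorphisms $\mu:W(X)\to H$ (also for $X=X^0$). $\Phi(X^0)$ is the (one-sorted) algebra of first-order formulas, modulo logical equivalence, built from equalities $w\equiv w'$ ($w,w'\in W(X^0)$) with Boolean connectives and quantifiers $\exists x$, $x\in X^0$; $Val^{X^0}_H(u)$ is the set of $\eta:W(X^0)\to H$ satisfying $u$. For $X\in\Gamma^0$, $\Phi(X)$ is the $X$-sort of the multi-sorted algebra of formulas (the free multi-sorted Halmos algebra over $\Theta$ generated by equalities), with homomorphism $Val^X_H:\Phi(X)\to$ (subsets of $\mathrm{Hom}(W(X),H)$), and $LKer(\mu)=\{u\in\Phi(X):\mu\in Val^X_H(u)\}$. A homomorphism $s:W(X^0)\to W(X)$ is special if $s(x)=x$ for all $x\in X$; it induces $s_*:\Phi(X^0)\to\Phi(X)$ with $Val^X_H(s_*u)=\{\mu:W(X)\to H\mid \mu s\in Val^{X^0}_H(u)\}$. A formula $u\in\Phi(X^0)$ is $X$-special if every free variable of $u$ lies in $X$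 and every bound variable lies in $X^0\setminus X$ (not all of $X$ need occur). For $\mu:W(X)\to H$ with $a_i=\mu(x_i)$, $Tp^H(\mu)$ is the set of $X$-special formulas $u(x_1,\dots,x_n;y_1,\dots,y_m)$ such that $u(a_1,\dots,a_n;y_1,\dots,y_m)$ holds in $H$. *)

theory Defs
  imports Main "HOL-Library.FuncSet"
begin

datatype ('op, 'v) trm = Var 'v | App 'op "('op, 'v) trm list"

fun trm_vars :: "('op, 'v) trm \<Rightarrow> 'v set" where
  "trm_vars (Var x) = {x}"
| "trm_vars (App f ts) = (\<Union>t\<in>set ts. trm_vars t)"

fun trm_wf :: "('op \<Rightarrow> nat) \<Rightarrow> ('op, 'v) trm \<Rightarrow> bool" where
  "trm_wf ar (Var x) = True"
| "trm_wf ar (App f ts) = (length ts = ar f \<and> (\<forall>t\<in>set ts. trm_wf ar t))"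

fun trm_eval :: "('op \<Rightarrow> 'a list \<Rightarrow> 'a) \<Rightarrow> ('v \<Rightarrow> 'a) \<Rightarrow> ('op, 'v) trm \<Rightarrow> 'a" where
  "trm_eval F \<eta> (Var x) = \<eta> x"
| "trm_eval F \<eta> (App f ts) = F f (map (trm_eval F \<eta>) ts)"

definition is_algebra :: "('op \<Rightarrow> nat) \<Rightarrow> 'a set \<Rightarrow> ('op \<Rightarrow> 'a list \<Rightarrow> 'a) \<Rightarrow> bool" where
  "is_algebra ar H F \<longleftrightarrow> H \<noteq> {} \<and>
     (\<forall>f as. length as = ar f \<and> set as \<subseteq> H \<longrightarrow> F f as \<in> H)"

text \<open>The variety \<Theta> is given by a set E of identities; H \<in> \<Theta> iff H is an algebra
  satisfying all identities of E.\<close>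
definition in_variety ::
  "('op \<Rightarrow> nat) \<Rightarrow> (('op, 'v) trm \<times> ('op, 'v) trm) set \<Rightarrow> 'a set \<Rightarrow> ('op \<Rightarrow> 'a list \<Rightarrow> 'a) \<Rightarrow> bool" where
  "in_variety ar E H F \<longleftrightarrow> is_algebra ar H F \<and>
     (\<forall>(w, w') \<in> E. \<forall>\<eta> \<in> UNIV \<rightarrow> H. trm_eval F \<eta> w = trm_eval F \<eta> w')"

datatype ('op, 'v) fml =
    FFalse
  | FEq "('op, 'v) trm" "('op, 'v) trm"
  | FNeg "('op, 'v) fml"
  | FConj "('op, 'v) fml" "('op, 'v) fml"
  | FDisj "('op, 'v) fml" "('op, 'v) fml"
  | FImp "('op, 'v) fml" "('op, 'v) fml"
  | FEx 'v "('op, 'v) fml"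
  | FAll 'v "('op, 'v) fml"

fun fml_wf :: "('op \<Rightarrow> nat) \<Rightarrow> ('op, 'v) fml \<Rightarrow> bool" where
  "fml_wf ar FFalse = True"
| "fml_wf ar (FEq w w') = (trm_wf ar w \<and> trm_wf ar w')"
| "fml_wf ar (FNeg p) = fml_wf ar p"
| "fml_wf ar (FConj p q) = (fml_wf ar p \<and> fml_wf ar q)"
| "fml_wf ar (FDisj p q) = (fml_wf ar p \<and> fml_wf ar q)"
| "fml_wf ar (FImp p q) = (fml_wf ar p \<and> fml_wf ar q)"
| "fml_wf ar (FEx x p) = fml_wf ar p"
| "fml_wf ar (FAll x p) = fml_wf ar p"

fun free_vars :: "('op, 'v) fml \<Rightarrow> 'v set" where
  "free_vars FFalse = {}"
| "free_vars (FEq w w') = trm_vars w \<union> trm_vars w'"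
| "free_vars (FNeg p) = free_vars p"
| "free_vars (FConj p q) = free_vars p \<union> free_vars q"
| "free_vars (FDisj p q) = free_vars p \<union> free_vars q"
| "free_vars (FImp p q) = free_vars p \<union> free_vars q"
| "free_vars (FEx x p) = free_vars p - {x}"
| "free_vars (FAll x p) = free_vars p - {x}"

fun bound_vars :: "('op, 'v) fml \<Rightarrow> 'v set" where
  "bound_vars FFalse = {}"
| "bound_vars (FEq w w') = {}"
| "bound_vars (FNeg p) = bound_vars p"
| "bound_vars (FConj p q) = bound_vars p \<union> bound_vars q"
| "bound_vars (FDisj p q) = bound_vars p \<union> bound_vars q"
| "bound_vars (FImp p q) = bound_vars p \<union> bound_vars q"
| "bound_vars (FEx x p) = insert x (bound_vars p)"
| "bound_vars (FAll x p) = insert x (bound_vars p)"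

fun sat :: "'a set \<Rightarrow> ('op \<Rightarrow> 'a list \<Rightarrow> 'a) \<Rightarrow> ('v \<Rightarrow> 'a) \<Rightarrow> ('op, 'v) fml \<Rightarrow> bool" where
  "sat H F \<eta> FFalse = False"
| "sat H F \<eta> (FEq w w') = (trm_eval F \<eta> w = trm_eval F \<eta> w')"
| "sat H F \<eta> (FNeg p) = (\<not> sat H F \<eta> p)"
| "sat H F \<eta> (FConj p q) = (sat H F \<eta> p \<and> sat H F \<eta> q)"
| "sat H F \<eta> (FDisj p q) = (sat H F \<eta> p \<or> sat H F \<eta> q)"
| "sat H F \<eta> (FImp p q) = (sat H F \<eta> p \<longrightarrow> sat H F \<eta> q)"
| "sat H F \<eta> (FEx x p) = (\<exists>a\<in>H. sat H F (\<eta>(x := a)) p)"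
| "sat H F \<eta> (FAll x p) = (\<forall>a\<in>H. sat H F (\<eta>(x := a)) p)"

text \<open>Val^{X^0}_H(u): the points \<eta> : W(X^0) \<rightarrow> H (given by their values on X^0) satisfying u.\<close>
definition Val0 :: "'a set \<Rightarrow> ('op \<Rightarrow> 'a list \<Rightarrow> 'a) \<Rightarrow> ('op, 'v) fml \<Rightarrow> ('v \<Rightarrow> 'a) set" where
  "Val0 H F u = {\<eta>. \<eta> \<in> UNIV \<rightarrow> H \<and> sat H F \<eta> u}"

text \<open>A special homomorphism s : W(X^0) \<rightarrow> W(X), given by the images \<sigma> v of the free
  generators (as well-formed terms over X), with \<sigma> x = x for x \<in> X.\<close>
definition special_hom :: "('op \<Rightarrow> nat) \<Rightarrow> 'v set \<Rightarrow> ('v \<Rightarrow> ('op, 'v) trm) \<Rightarrow> bool" where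
  "special_hom ar X \<sigma> \<longleftrightarrow> (\<forall>v. trm_wf ar (\<sigma> v) \<and> trm_vars (\<sigma> v) \<subseteq> X) \<and> (\<forall>x\<in>X. \<sigma> x = Var x)"

text \<open>The composite \<mu> s : W(X^0) \<rightarrow> H, as a valuation of X^0.\<close>
definition comp_point :: "('op \<Rightarrow> 'a list \<Rightarrow> 'a) \<Rightarrow> ('v \<Rightarrow> 'a) \<Rightarrow> ('v \<Rightarrow> ('op, 'v) trm) \<Rightarrow> 'v \<Rightarrow> 'a" where
  "comp_point F \<mu> \<sigma> = (\<lambda>v. trm_eval F \<mu> (\<sigma> v))"

definition X_special :: "'v set \<Rightarrow> ('op, 'v) fml \<Rightarrow> bool" where
  "X_special X u \<longleftrightarrow> free_vars u \<subseteq> X \<and> bound_vars u \<inter> X = {}"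

text \<open>Tp^H(\<mu>): X-special formulas u(x_1..x_n; y) such that u(a_1..a_n; y) holds in H,
  i.e. u is satisfied by every valuation of X^0 in H agreeing with \<mu> on X.\<close>
definition Tp :: "('op \<Rightarrow> nat) \<Rightarrow> 'v set \<Rightarrow> 'a set \<Rightarrow> ('op \<Rightarrow> 'a list \<Rightarrow> 'a) \<Rightarrow> ('v \<Rightarrow> 'a) \<Rightarrow> ('op, 'v) fml set" where
  "Tp ar X H F \<mu> = {u. fml_wf ar u \<and> X_special X u \<and>
      (\<forall>\<eta> \<in> UNIV \<rightarrow> H. (\<forall>x\<in>X. \<eta> x = \<mu> x) \<longrightarrow> sat H F \<eta> u)}"

text \<open>LKer(\<mu>) for a point \<mu> : W(X) \<rightarrow> H, relative to the X-sort \<Phi>(X) with its value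
  map ValX : \<Phi>(X) \<rightarrow> subsets of Hom(W(X),H).\<close>
definition LKer :: "('f \<Rightarrow> ('v \<Rightarrow> 'a) set) \<Rightarrow> ('v \<Rightarrow> 'a) \<Rightarrow> 'f set" where
  "LKer ValX \<mu> = {\<phi>. \<mu> \<in> ValX \<phi>}"

end

theory Submission
  imports Defs
begin

text \<open>Both sides say that u holds at the valuation \<mu> s, i.e. at x \<mapsto> \<mu> (s x).
  For LKer this is the defining property of s_star; for Tp^H(\<mu>) it holds because \<mu> s
  agrees with \<mu> on X (s is special) while the truth of u depends only on its free
  variables, all of which lie in X.\<close>

lemma trm_eval_cong:
  "(\<And>x. x \<in> trm_vars t \<Longrightarrow> \<eta> x = \<eta>' x) \<Longrightarrow> trm_eval F \<eta> t = trm_eval F \<eta>' t"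
proof (induction t)
  case (App f ts)
  then have "map (trm_eval F \<eta>) ts = map (trm_eval F \<eta>') ts" by (intro map_cong) auto
  then show ?case by (simp only: trm_eval.simps)
qed simp

lemma sat_cong:
  "(\<And>x. x \<in> free_vars p \<Longrightarrow> \<eta> x = \<eta>' x) \<Longrightarrow> sat H F \<eta> p = sat H F \<eta>' p"
proof (induction p arbitrary: \<eta> \<eta>')
  case (FEq w w')
  then have "trm_eval F \<eta> w = trm_eval F \<eta>' w" and "trm_eval F \<eta> w' = trm_eval F \<eta>' w'"
    by (auto intro: trm_eval_cong)
  then show ?case by simp
next
  case (FNeg p)
  have "sat H F \<eta> p = sat H F \<eta>' p" by (rule FNeg.IH) (simp add: FNeg.prems)
  then show ?case by simp
next
  case (FConj p q)
  have "sat H F \<eta> p = sat H F \<eta>' p" by (rule FConj.IH) (simp add: FConj.prems)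
  moreover have "sat H F \<eta> q = sat H F \<eta>' q" by (rule FConj.IH) (simp add: FConj.prems)
  ultimately show ?case by simp
next
  case (FDisj p q)
  have "sat H F \<eta> p = sat H F \<eta>' p" by (rule FDisj.IH) (simp add: FDisj.prems)
  moreover have "sat H F \<eta> q = sat H F \<eta>' q" by (rule FDisj.IH) (simp add: FDisj.prems)
  ultimately show ?case by simp
next
  case (FImp p q)
  have "sat H F \<eta> p = sat H F \<eta>' p" by (rule FImp.IH) (simp add: FImp.prems)
  moreover have "sat H F \<eta> q = sat H F \<eta>' q" by (rule FImp.IH) (simp add: FImp.prems)
  ultimately show ?case by simp
next
  case (FEx x p)
  have "\<And>a. sat H F (\<eta>(x := a)) p = sat H F (\<eta>'(x := a)) p"
    by (rule FEx.IH) (simp add: FEx.prems)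
  then show ?case by simp
next
  case (FAll x p)
  have "\<And>a. sat H F (\<eta>(x := a)) p = sat H F (\<eta>'(x := a)) p"
    by (rule FAll.IH) (simp add: FAll.prems)
  then show ?case by simp
qed simp

lemma trm_eval_in_carrier:
  assumes "is_algebra ar H F" and "trm_wf ar t" and "\<And>x. x \<in> trm_vars t \<Longrightarrow> \<eta> x \<in> H"
  shows "trm_eval F \<eta> t \<in> H"
  using assms(2,3)
proof (induction t)
  case (App f ts)
  then have "set (map (trm_eval F \<eta>) ts) \<subseteq> H" and "length (map (trm_eval F \<eta>) ts) = ar f"
    by auto
  then show ?case using assms(1) unfolding is_algebra_def by simp
qed simp

lemma comp_point_special:
  "special_hom ar X \<sigma> \<Longrightarrow> x \<in> X \<Longrightarrow> comp_point F \<mu> \<sigma> x = \<mu> x"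
  by (simp add: special_hom_def comp_point_def)

lemma comp_point_in_carrier:
  assumes "is_algebra ar H F" and "special_hom ar X \<sigma>" and "\<mu> \<in> X \<rightarrow> H"
  shows "comp_point F \<mu> \<sigma> \<in> UNIV \<rightarrow> H"
proof
  fix v
  have "trm_wf ar (\<sigma> v)" and "trm_vars (\<sigma> v) \<subseteq> X"
    using assms(2) unfolding special_hom_def by auto
  then show "comp_point F \<mu> \<sigma> v \<in> H"
    unfolding comp_point_def using assms(1,3) by (auto intro: trm_eval_in_carrier)
qed

lemma mem_Tp_iff_sat:
  assumes "fml_wf ar u" and "X_special X u"
    and "\<eta> \<in> UNIV \<rightarrow> H" and "\<And>x. x \<in> X \<Longrightarrow> \<eta> x = \<mu> x"
  shows "u \<in> Tp ar X H F \<mu> \<longleftrightarrow> sat H F \<eta> u"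
proof
  assume "u \<in> Tp ar X H F \<mu>"
  then show "sat H F \<eta> u" using assms(3,4) unfolding Tp_def by blast
next
  assume \<eta>_sat: "sat H F \<eta> u"
  have "free_vars u \<subseteq> X" using assms(2) unfolding X_special_def by blast
  then have "sat H F \<eta>' u = sat H F \<eta> u" if "\<forall>x\<in>X. \<eta>' x = \<mu> x" for \<eta>'
    using that assms(4) by (intro sat_cong) auto
  then have "sat H F \<eta>' u" if "\<forall>x\<in>X. \<eta>' x = \<mu> x" for \<eta>'
    using \<eta>_sat that by blast
  then show "u \<in> Tp ar X H F \<mu>" using assms(1,2) unfolding Tp_def by blast
qed

theorem theorem3p2:
  fixes ar :: "'op \<Rightarrow> nat"
    and E :: "(('op, 'v) trm \<times> ('op, 'v) trm) set"
    and H :: "'a set" and F :: "'op \<Rightarrow> 'a list \<Rightarrow> 'a"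
    and X :: "'v set"
    and \<sigma> :: "'v \<Rightarrow> ('op, 'v) trm"
    and ValX :: "'f \<Rightarrow> ('v \<Rightarrow> 'a) set"
    and s_star :: "('op, 'v) fml \<Rightarrow> 'f"
    and u :: "('op, 'v) fml"
    and \<mu> :: "'v \<Rightarrow> 'a"
  assumes X0_inf: "infinite (UNIV :: 'v set)"
    and HTheta: "in_variety ar E H F"
    and Xfin: "finite X"
    and s_special: "special_hom ar X \<sigma>"
    and s_star_val: "\<And>v. fml_wf ar v \<Longrightarrow>
          ValX (s_star v) = {\<nu>. \<nu> \<in> X \<rightarrow>\<^sub>E H \<and> comp_point F \<nu> \<sigma> \<in> Val0 H F v}"
    and u_wf: "fml_wf ar u"
    and u_special: "X_special X u"
    and mu_point: "\<mu> \<in> X \<rightarrow>\<^sub>E H"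
  shows "u \<in> Tp ar X H F \<mu> \<longleftrightarrow> s_star u \<in> LKer ValX \<mu>"
proof -
  have H_algebra: "is_algebra ar H F" using HTheta unfolding in_variety_def by blast
  have "\<mu> \<in> X \<rightarrow> H" using mu_point by (simp add: PiE_def)
  with H_algebra s_special have \<mu>s_point: "comp_point F \<mu> \<sigma> \<in> UNIV \<rightarrow> H"
    by (rule comp_point_in_carrier)
  have "u \<in> Tp ar X H F \<mu> \<longleftrightarrow> sat H F (comp_point F \<mu> \<sigma>) u"
    using u_wf u_special \<mu>s_point comp_point_special[OF s_special] by (rule mem_Tp_iff_sat)
  also have "\<dots> \<longleftrightarrow> s_star u \<in> LKer ValX \<mu>"
    using mu_point \<mu>s_point by (simp add: LKer_def s_star_val[OF u_wf] Val0_def)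
  finally show ?thesis .
qed

end
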